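(* With notation as in the context, fix distinct $i,j\in\{1,\dots,2r\}$ and let $\rho\in A_1^{[1]}$. Let $u_k=c_k^{\rho}$ ($1\le k\le 8$) be the vertices of the image cycle $C_{ij}^\rho$, and define $a_1,\dots,a_8\in S$ by $u_{k+1}=a_ku_k$ for $1\le k\le 7$ and $u_1=a_8u_8$ (so $a_1=g_i$, $a_8=g_j$). If $z^{\rho}\neq z$, then each element of $S$ that occurs in $(a_1,\dots,a_8)$ occurs exactly twice, the elements $a_1,a_2,a_3,a_4$ are pairwise distinct, and the elements $a_5,a_6,a_7,a_8$ are pairwise distinct.
   Context: Let $r\ge1$ and $G$ an extraspecial $2$-group of order $2^{2r+1}$ (i.e. $|Z(G)|=2$, $G/Z(G)\cong\mathbb{Z}_2^{2r}$), $Z=Z(G)=\langle z\rangle$ identified with $\mathbb{F}_2$, $G/Z$ with quadratic form $Q(Zx)=x^2$ and bilinear form $B(Zx,Zy)=[x,y]$. Assume $\{Zg_1,\dots,Zg_{2r}\}$ is a symmetric basis of $G/Z$ ($Q(Zg_i)=0$, $B(Zg_i,Zg_j)=1$ for $i\ne j$), so $g_i^2=1$ and $g_ig_j=g_jg_iz$ for $i\ne j$. $S=\{g_1,\dots,g_{2r}\}$, $\Gamma=\mathrm{Cay}(G,S)$ (vertex set $G$, edges $\{x,sx\}$), $A=\mathrm{Aut}(\Gamma)$, $N(v)$ the set of neighbours of $v$ (so $N(1)=S$), and $A_v^{[1]}$ the subgroup of $A$ fixing $v$ and every vertex of $N(v)$. For distinct $i,j$, $C_{ij}$ is the $8$-cycle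 with vertices $c_1=1$ and $c_k=s_{k-1}s_{k-2}\cdots s_1$ ($2\le k\le 8$), where $s_k=g_i$ for $k$ odd and $s_k=g_j$ for $k$ even; explicitly $c_1,\dots,c_8=1,\,g_i,\,g_jg_i,\,g_jz,\,z,\,g_iz,\,g_jg_iz,\,g_j$. *)

theory Defs
  imports "HOL-Algebra.Algebra"
begin

definition grp_center :: "('a, 'b) monoid_scheme \<Rightarrow> 'a set" where
  "grp_center G = {x \<in> carrier G. \<forall>y \<in> carrier G. x \<otimes>\<^bsub>G\<^esub> y = y \<otimes>\<^bsub>G\<^esub> x}"

text \<open>Extraspecial 2-group of order 2^(2r+1): |Z(G)| = 2 and G/Z(G) elementary abelian
  (every square and every commutator lies in Z(G)); together with the order this says
  G/Z(G) is isomorphic to Z_2^(2r).\<close>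
definition extraspecial2 :: "('a, 'b) monoid_scheme \<Rightarrow> nat \<Rightarrow> bool" where
  "extraspecial2 G r \<longleftrightarrow> group G \<and> finite (carrier G) \<and> card (carrier G) = 2 ^ (2 * r + 1)
     \<and> card (grp_center G) = 2
     \<and> (\<forall>x \<in> carrier G. x \<otimes>\<^bsub>G\<^esub> x \<in> grp_center G)
     \<and> (\<forall>x \<in> carrier G. \<forall>y \<in> carrier G.
          x \<otimes>\<^bsub>G\<^esub> y \<otimes>\<^bsub>G\<^esub> inv\<^bsub>G\<^esub> x \<otimes>\<^bsub>G\<^esub> inv\<^bsub>G\<^esub> y \<in> grp_center G)"

text \<open>Spanning of G/Z by the cosets Z g_i means G is generated by z and the g_i; since
  |G/Z| = 2^(2r), 2r spanning vectors form a basis.\<close>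
definition symmetric_basis :: "('a, 'b) monoid_scheme \<Rightarrow> nat \<Rightarrow> 'a \<Rightarrow> (nat \<Rightarrow> 'a) \<Rightarrow> bool" where
  "symmetric_basis G r z g \<longleftrightarrow>
     grp_center G = {\<one>\<^bsub>G\<^esub>, z} \<and> z \<noteq> \<one>\<^bsub>G\<^esub>
     \<and> (\<forall>i \<in> {1..2*r}. g i \<in> carrier G)
     \<and> generate G (insert z (g ` {1..2*r})) = carrier G
     \<and> (\<forall>i \<in> {1..2*r}. g i \<otimes>\<^bsub>G\<^esub> g i = \<one>\<^bsub>G\<^esub>)
     \<and> (\<forall>i \<in> {1..2*r}. \<forall>j \<in> {1..2*r}. i \<noteq> j \<longrightarrow>
          g i \<otimes>\<^bsub>G\<^esub> g j = g j \<otimes>\<^bsub>G\<^esub> g i \<otimes>\<^bsub>G\<^esub> z)"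

definition cay_adj :: "('a, 'b) monoid_scheme \<Rightarrow> 'a set \<Rightarrow> 'a \<Rightarrow> 'a \<Rightarrow> bool" where
  "cay_adj G S x y \<longleftrightarrow> x \<in> carrier G \<and> y \<in> carrier G \<and>
     (\<exists>s \<in> S. y = s \<otimes>\<^bsub>G\<^esub> x \<or> x = s \<otimes>\<^bsub>G\<^esub> y)"

definition cay_aut :: "('a, 'b) monoid_scheme \<Rightarrow> 'a set \<Rightarrow> ('a \<Rightarrow> 'a) \<Rightarrow> bool" where
  "cay_aut G S \<rho> \<longleftrightarrow> bij_betw \<rho> (carrier G) (carrier G) \<and>
     (\<forall>x \<in> carrier G. \<forall>y \<in> carrier G. cay_adj G S x y \<longleftrightarrow> cay_adj G S (\<rho> x) (\<rho> y))"

definition nbhd :: "('a, 'b) monoid_scheme \<Rightarrow> 'a set \<Rightarrow> 'a \<Rightarrow> 'a set" where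
  "nbhd G S v = {w. cay_adj G S v w}"

definition stab1 :: "('a, 'b) monoid_scheme \<Rightarrow> 'a set \<Rightarrow> 'a \<Rightarrow> ('a \<Rightarrow> 'a) set" where
  "stab1 G S v = {\<rho>. cay_aut G S \<rho> \<and> \<rho> v = v \<and> (\<forall>w \<in> nbhd G S v. \<rho> w = w)}"

text \<open>The 8-cycle C_ij as list [c_1,...,c_8] (0-indexed in the list).\<close>
definition cyc8 :: "('a, 'b) monoid_scheme \<Rightarrow> 'a \<Rightarrow> 'a \<Rightarrow> 'a \<Rightarrow> 'a list" where
  "cyc8 G z gi gj = [\<one>\<^bsub>G\<^esub>, gi, gj \<otimes>\<^bsub>G\<^esub> gi, gj \<otimes>\<^bsub>G\<^esub> z, z, gi \<otimes>\<^bsub>G\<^esub> z,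
                     gj \<otimes>\<^bsub>G\<^esub> gi \<otimes>\<^bsub>G\<^esub> z, gj]"

end

theory Submission
  imports Defs
begin

text \<open>The labels a_k = u_(k+1) u_k^-1 of the image cycle lie in S because \<open>\<rho>\<close> is a graph
  automorphism, and along the cycle they telescope: a_4 a_3 a_2 a_1 = \<open>\<rho> z\<close> and
  a_8 a_7 a_6 a_5 = \<open>inv (\<rho> z)\<close>. As S consists of pairwise anticommuting involutions, a word
  of length four over S with a repeated letter collapses to z or to a product s t of two letters.
  Neither is possible for \<open>\<rho> z\<close>: it differs from z, and \<open>\<rho> z = s \<otimes> t\<close> would make z
  adjacent to \<open>t = \<rho> t\<close>. Hence both halves of the label word are duplicate-free. Finally, the
  whole word multiplies to 1, and moving a letter s across a word over S produces z to the power
  of the number of letters different from s; so s occurs an even number of times, i.e. twice if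
  at all.\<close>

lemma count_list_distinct: "distinct xs \<Longrightarrow> count_list xs x = (if x \<in> set xs then 1 else 0)"
  by (induction xs) auto

definition word_prod :: "('a, 'b) monoid_scheme \<Rightarrow> 'a list \<Rightarrow> 'a" where
  "word_prod G w = foldr (\<otimes>\<^bsub>G\<^esub>) w \<one>\<^bsub>G\<^esub>"

context monoid
begin

lemma word_prod_Nil [simp]: "word_prod G [] = \<one>"
  by (simp add: word_prod_def)

lemma word_prod_Cons [simp]: "word_prod G (x # w) = x \<otimes> word_prod G w"
  by (simp add: word_prod_def)

lemma word_prod_closed [intro, simp]: "set w \<subseteq> carrier G \<Longrightarrow> word_prod G w \<in> carrier G"
  by (induction w) auto

lemma word_prod_append:
  "set v \<subseteq> carrier G \<Longrightarrow> set w \<subseteq> carrier G \<Longrightarrow> word_prod G (v @ w) = word_prod G v \<otimes> word_prod G w"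
  by (induction v) (auto simp: m_assoc)

end

lemma (in group) word_prod_telescope:
  assumes "\<And>k. u k \<in> carrier G" and "m \<le> n"
  shows "word_prod G (rev (map (\<lambda>k. u (Suc k) \<otimes> inv (u k)) [m..<n])) = u n \<otimes> inv (u m)"
  using assms(2)
proof (induction n rule: dec_induct)
  case base
  show ?case using assms(1) by simp
next
  case (step n)
  have "set (rev (map (\<lambda>k. u (Suc k) \<otimes> inv (u k)) [m..<n])) \<subseteq> carrier G"
    using assms(1) by auto
  then show ?case
    using step assms(1) by (simp add: word_prod_append m_assoc[symmetric]) (simp add: m_assoc)
qed

definition closed_walk_labels :: "('a, 'b) monoid_scheme \<Rightarrow> 'a list \<Rightarrow> 'a list" where
  "closed_walk_labels G u =
     map (\<lambda>k. u ! ((k + 1) mod length u) \<otimes>\<^bsub>G\<^esub> inv\<^bsub>G\<^esub> (u ! k)) [0..<length u]"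

lemma closed_walk_labels_mod:
  "closed_walk_labels G u = map (\<lambda>k. u ! (Suc k mod length u) \<otimes>\<^bsub>G\<^esub> inv\<^bsub>G\<^esub> (u ! (k mod length u))) [0..<length u]"
  unfolding closed_walk_labels_def by (rule map_cong) auto

lemma (in group) closed_walk_labels_prod:
  assumes "set u \<subseteq> carrier G" "m < length u"
  shows "word_prod G (rev (take m (closed_walk_labels G u))) = u ! m \<otimes> inv (u ! 0)"
    and "word_prod G (rev (drop m (closed_walk_labels G u))) = u ! 0 \<otimes> inv (u ! m)"
proof -
  have "k mod length u < length u" for k
    using assms(2) by (intro mod_less_divisor) auto
  then have "u ! (k mod length u) \<in> carrier G" for k
    using assms(1) nth_mem by blast
  then show "word_prod G (rev (take m (closed_walk_labels G u))) = u ! m \<otimes> inv (u ! 0)"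
    and "word_prod G (rev (drop m (closed_walk_labels G u))) = u ! 0 \<otimes> inv (u ! m)"
    using word_prod_telescope[of "\<lambda>k. u ! (k mod length u)" 0 m]
      word_prod_telescope[of "\<lambda>k. u ! (k mod length u)" m "length u"] assms(2)
    by (simp_all add: closed_walk_labels_mod take_map drop_map del: upt_Suc)
qed

locale anticommuting_involutions = group G for G (structure) +
  fixes S :: "'a set" and z :: 'a
  assumes z_closed: "z \<in> carrier G"
    and z_central: "x \<in> carrier G \<Longrightarrow> z \<otimes> x = x \<otimes> z"
    and z_neq_one: "z \<noteq> \<one>"
    and z_square: "z \<otimes> z = \<one>"
    and S_closed: "S \<subseteq> carrier G"
    and S_square: "s \<in> S \<Longrightarrow> s \<otimes> s = \<one>"
    and S_anticommute: "s \<in> S \<Longrightarrow> t \<in> S \<Longrightarrow> s \<noteq> t \<Longrightarrow> s \<otimes> t = t \<otimes> s \<otimes> z"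
begin

lemma S_carrier [simp]: "s \<in> S \<Longrightarrow> s \<in> carrier G"
  using S_closed by blast

lemma S_inv [simp]: "s \<in> S \<Longrightarrow> inv s = s"
  using S_square by (simp add: inv_equality)

lemma S_prod_z_swap:
  assumes "s \<in> S" "t \<in> S" "s \<noteq> t"
  shows "s \<otimes> t \<otimes> z = t \<otimes> s"
proof -
  have "s \<otimes> t \<otimes> z = t \<otimes> s \<otimes> (z \<otimes> z)"
    using S_anticommute[OF assms] assms z_closed by (simp add: m_assoc)
  then show ?thesis
    using assms by (simp add: z_square)
qed

lemma S_conj:
  assumes s: "s \<in> S" and t: "t \<in> S" and "s \<noteq> t"
  shows "s \<otimes> (t \<otimes> s) = t \<otimes> z"
proof -
  have "s \<otimes> (t \<otimes> s) = t \<otimes> s \<otimes> (z \<otimes> s)"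
    using S_anticommute[OF assms] s t z_closed by (simp flip: m_assoc)
  also have "\<dots> = t \<otimes> (s \<otimes> s) \<otimes> z"
    using s t z_closed by (simp add: z_central m_assoc)
  finally show ?thesis
    using s t S_square by simp
qed

lemma S_prod_neq_z:
  assumes s: "s \<in> S" and t: "t \<in> S"
  shows "s \<otimes> t \<noteq> z"
proof
  assume st: "s \<otimes> t = z"
  show False
  proof (cases "s = t")
    case True
    then show False using st z_neq_one S_square[OF s] by simp
  next
    case False
    then have "t \<otimes> s \<otimes> z = z"
      using st S_anticommute[OF s t] by simp
    then have "t \<otimes> s = \<one>"
      using s t z_closed by simp
    then show False
      using False s t by (metis S_carrier S_inv inv_equality)
  qed
qed

lemma z_pow_central: "x \<in> carrier G \<Longrightarrow> z [^] (n::nat) \<otimes> x = x \<otimes> z [^] n"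
  by (induction n) (simp_all add: z_closed m_assoc, simp add: z_central z_closed flip: m_assoc)

lemma z_pow_parity: "z [^] (n::nat) = (if even n then \<one> else z)"
  by (induction n) (auto simp: z_closed z_square)

lemma z_pow_eq_one_iff: "z [^] (n::nat) = \<one> \<longleftrightarrow> even n"
  using z_neq_one by (simp add: z_pow_parity)

lemma z_pow_closed [simp]: "z [^] (n::nat) \<in> carrier G"
  using z_closed by simp

lemma word_prod_commute:
  assumes "set w \<subseteq> S" and g: "g \<in> S"
  shows "word_prod G w \<otimes> g = g \<otimes> word_prod G w \<otimes> z [^] (length w - count_list w g)"
  using assms(1)
proof (induction w)
  case Nil
  show ?case using g by simp
next
  case (Cons s w)
  define P where "P = word_prod G w"
  define n where "n = length w - count_list w g"
  have s: "s \<in> S" and P: "P \<in> carrier G" and IH: "P \<otimes> g = g \<otimes> P \<otimes> z [^] n"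
    using Cons S_closed by (auto simp: P_def n_def)
  have "s \<otimes> P \<otimes> g = s \<otimes> g \<otimes> P \<otimes> z [^] n"
    using IH s g P by (simp add: m_assoc)
  also have "\<dots> = g \<otimes> (s \<otimes> P) \<otimes> z [^] (if s = g then n else Suc n)"
  proof (cases "s = g")
    case False
    then have "s \<otimes> g \<otimes> P \<otimes> z [^] n = g \<otimes> s \<otimes> (z \<otimes> P) \<otimes> z [^] n"
      using S_anticommute[OF s g] s g P by (simp add: m_assoc z_closed)
    then show ?thesis
      using False s g P by (simp add: z_central z_closed m_assoc nat_pow_Suc2)
  qed (use g P in \<open>simp add: m_assoc\<close>)
  also have "(if s = g then n else Suc n) = length (s # w) - count_list (s # w) g"
    using count_le_length[of w g] by (simp add: n_def Suc_diff_le)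
  finally show ?case by (simp add: P_def)
qed

lemma word_prod_one_parity:
  assumes "set w \<subseteq> S" "word_prod G w = \<one>" "g \<in> S"
  shows "even (length w - count_list w g)"
proof -
  have "g = g \<otimes> z [^] (length w - count_list w g)"
    using word_prod_commute[OF assms(1,3)] assms by simp
  then show ?thesis
    using assms(3) by (simp add: z_pow_eq_one_iff[symmetric])
qed

lemma word_prod_cancel_pair:
  assumes "set (v @ s # w @ s # x) \<subseteq> S"
  shows "word_prod G (v @ s # w @ s # x) = word_prod G (v @ w @ x) \<otimes> z [^] (length w - count_list w s)"
proof -
  have s: "s \<in> S" and c: "set v \<subseteq> carrier G" "set w \<subseteq> carrier G" "set x \<subseteq> carrier G"
    using assms S_closed by auto
  define n where "n = length w - count_list w s"
  have "s \<otimes> (word_prod G w \<otimes> (s \<otimes> word_prod G x))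
        = s \<otimes> (word_prod G w \<otimes> s) \<otimes> word_prod G x"
    using s c by (simp add: m_assoc)
  also have "\<dots> = word_prod G w \<otimes> word_prod G x \<otimes> z [^] n"
    using word_prod_commute[of w s] assms s c S_square[OF s]
    by (simp add: n_def m_assoc[symmetric]) (simp add: m_assoc z_pow_central)
  finally show ?thesis
    using s c by (simp add: word_prod_append n_def m_assoc)
qed

lemma not_distinct_word_prod:
  assumes w: "set w \<subseteq> S" "length w = 4" "\<not> distinct w"
  shows "word_prod G w \<in> insert z (S <#> S)"
proof -
  obtain v s w' x where decomp: "w = v @ s # w' @ s # x"
    using not_distinct_decomp[OF w(3)] by auto
  then have "length (v @ w' @ x) = 2"
    using w(2) by simp
  then obtain p q where pq: "v @ w' @ x = [p, q]"
    by (metis length_0_conv length_Suc_conv numeral_2_eq_2)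
  have "set [p, q] \<subseteq> S"
    unfolding pq[symmetric] using w(1) decomp by auto
  then have p: "p \<in> S" and q: "q \<in> S" by auto
  define m where "m = length w' - count_list w' s"
  have "word_prod G w = word_prod G (v @ w' @ x) \<otimes> z [^] m"
    using word_prod_cancel_pair w(1) unfolding decomp m_def by blast
  then have prod: "word_prod G w = p \<otimes> q \<otimes> z [^] m"
    using p q by (simp add: pq)
  consider "even m" | "odd m" "p = q" | "odd m" "p \<noteq> q" by blast
  then show ?thesis
  proof cases
    case 1
    then show ?thesis using prod p q by (auto simp: z_pow_parity set_mult_def)
  next
    case 2
    then show ?thesis using prod p q S_square z_closed by (simp add: z_pow_parity)
  next
    case 3
    then show ?thesis using prod p q S_prod_z_swap by (auto simp: z_pow_parity set_mult_def)
  qed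
qed

lemma count_list_eq_2_if_word_prod_one:
  assumes "set (v @ w) \<subseteq> S" "word_prod G (v @ w) = \<one>" "even (length (v @ w))"
    and "distinct v" "distinct w" "g \<in> S" "g \<in> set (v @ w)"
  shows "count_list (v @ w) g = 2"
proof -
  have "count_list (v @ w) g \<le> 2"
    using \<open>distinct v\<close> \<open>distinct w\<close> by (simp add: count_list_distinct)
  moreover have "count_list (v @ w) g \<noteq> 0"
    using assms(7) by (simp only: count_list_0_iff) simp
  moreover have "even (length (v @ w) - count_list (v @ w) g)"
    using word_prod_one_parity assms(1,2,6) by blast
  ultimately show ?thesis
    using assms(3) count_le_length[of "v @ w" g] by presburger
qed

lemma cay_adj_label:
  assumes "cay_adj G S x y"
  shows "y \<otimes> inv x \<in> S"
proof -
  obtain s where s: "s \<in> S" "y = s \<otimes> x \<or> x = s \<otimes> y" and xy: "x \<in> carrier G" "y \<in> carrier G"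
    using assms unfolding cay_adj_def by blast
  have "y = s \<otimes> x"
    using s xy S_square[OF s(1)] by (auto simp flip: m_assoc)
  then show ?thesis
    using s xy by (simp add: m_assoc)
qed

lemma cay_aut_label:
  assumes "cay_aut G S \<rho>" "x \<in> carrier G" "s \<in> S"
  shows "\<rho> (s \<otimes> x) \<otimes> inv (\<rho> x) \<in> S"
proof -
  have "cay_adj G S x (s \<otimes> x)"
    using assms unfolding cay_adj_def by auto
  then have "cay_adj G S (\<rho> x) (\<rho> (s \<otimes> x))"
    using assms unfolding cay_aut_def by auto
  then show ?thesis
    by (rule cay_adj_label)
qed

lemma inv_short_product:
  assumes "x \<in> insert z (S <#> S)"
  shows "inv x \<in> insert z (S <#> S)"
proof -
  have "inv z = z"
    using z_closed z_square by (simp add: inv_equality)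
  moreover have "inv (s \<otimes> t) = t \<otimes> s" if "s \<in> S" "t \<in> S" for s t
    using that by (simp add: inv_mult_group)
  ultimately show ?thesis
    using assms unfolding set_mult_def by auto
qed

lemma moved_z_not_short_product:
  assumes aut: "cay_aut G S \<rho>" and fix_S: "\<forall>t\<in>S. \<rho> t = t" and moved: "\<rho> z \<noteq> z"
  shows "\<rho> z \<notin> insert z (S <#> S)"
proof
  assume "\<rho> z \<in> insert z (S <#> S)"
  then obtain s t where st: "s \<in> S" "t \<in> S" "\<rho> z = s \<otimes> t"
    using moved unfolding set_mult_def by auto
  moreover have "cay_adj G S t (s \<otimes> t)"
    using st unfolding cay_adj_def by auto
  ultimately have "cay_adj G S (\<rho> t) (\<rho> z)"
    using fix_S by simp
  then have "cay_adj G S t z"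
    using aut st z_closed unfolding cay_aut_def by auto
  then have "z \<otimes> inv t \<in> S"
    by (rule cay_adj_label)
  moreover have "z = (z \<otimes> inv t) \<otimes> t"
    using st z_closed S_square by (simp add: m_assoc)
  ultimately show False
    using S_prod_neq_z st by metis
qed

lemma cay_aut_closed_walk_labels:
  assumes aut: "cay_aut G S \<rho>" and u: "set u \<subseteq> carrier G"
    and walk: "\<And>k. k < length u \<Longrightarrow> \<exists>s\<in>S. u ! ((k + 1) mod length u) = s \<otimes> u ! k"
  shows "set (closed_walk_labels G (map \<rho> u)) \<subseteq> S"
proof
  fix a assume "a \<in> set (closed_walk_labels G (map \<rho> u))"
  then obtain k where k: "k < length u"
    and "a = map \<rho> u ! ((k + 1) mod length u) \<otimes> inv (map \<rho> u ! k)"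
    unfolding closed_walk_labels_def by auto
  moreover have "(k + 1) mod length u < length u"
    using k by (intro mod_less_divisor) auto
  ultimately have a: "a = \<rho> (u ! ((k + 1) mod length u)) \<otimes> inv (\<rho> (u ! k))"
    by simp
  obtain s where "s \<in> S" "u ! ((k + 1) mod length u) = s \<otimes> u ! k"
    using walk[OF k] by blast
  then show "a \<in> S"
    using cay_aut_label[OF aut _ \<open>s \<in> S\<close>, of "u ! k"] u k a by (auto intro: nth_mem)
qed

lemma cyc8_step:
  assumes "gi \<in> S" "gj \<in> S" "gi \<noteq> gj" "k < 8"
  shows "cyc8 G z gi gj ! ((k + 1) mod 8) = (if even k then gi else gj) \<otimes> cyc8 G z gi gj ! k"
proof -
  have "k \<in> {0, 1, 2, 3, 4, 5, 6, 7}"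
    using assms(4) by auto
  moreover have "gj \<otimes> (gj \<otimes> z) = z"
    using assms(2) S_square z_closed by (simp flip: m_assoc)
  moreover have "gi \<otimes> (gj \<otimes> (gi \<otimes> z)) = gj"
    using assms(1-3) S_conj[of gi gj] z_closed z_square by (simp flip: m_assoc) (simp add: m_assoc)
  ultimately show ?thesis
    using assms S_conj[of gi gj] S_square z_closed
    by (auto simp: cyc8_def m_assoc)
qed

lemma cyc8_length [simp]: "length (cyc8 G z gi gj) = 8"
  by (simp add: cyc8_def)

lemma cyc8_closed_walk:
  assumes "gi \<in> S" "gj \<in> S" "gi \<noteq> gj" "k < length (cyc8 G z gi gj)"
  shows "\<exists>s\<in>S. cyc8 G z gi gj ! ((k + 1) mod length (cyc8 G z gi gj)) = s \<otimes> cyc8 G z gi gj ! k"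
  using cyc8_step[OF assms(1-3)] assms by auto

lemma moved_z_cycle_labels:
  assumes aut: "cay_aut G S \<rho>" and fix_one: "\<rho> \<one> = \<one>" and fix_S: "\<forall>t\<in>S. \<rho> t = t"
    and gij: "gi \<in> S" "gj \<in> S" "gi \<noteq> gj" and moved: "\<rho> z \<noteq> z"
  defines "a \<equiv> closed_walk_labels G (map \<rho> (cyc8 G z gi gj))"
  shows "set a \<subseteq> S \<and> (\<forall>s\<in>S. s \<in> set a \<longrightarrow> count_list a s = 2)
    \<and> distinct (take 4 a) \<and> distinct (drop 4 a)"
proof -
  let ?u = "map \<rho> (cyc8 G z gi gj)"
  have c: "set (cyc8 G z gi gj) \<subseteq> carrier G"
    using gij z_closed by (auto simp: cyc8_def)
  have \<rho>z: "\<rho> z \<in> carrier G"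
    using aut z_closed unfolding cay_aut_def bij_betw_def by auto
  have u: "set ?u \<subseteq> carrier G" "length ?u = 8" "?u ! 0 = \<one>" "?u ! 4 = \<rho> z"
    using c aut fix_one unfolding cay_aut_def bij_betw_def by (auto simp: cyc8_def)
  have labels: "set a \<subseteq> S"
    unfolding a_def using cay_aut_closed_walk_labels[OF aut c cyc8_closed_walk[OF gij]] .
  have prod_first: "word_prod G (rev (take 4 a)) = \<rho> z"
    and prod_second: "word_prod G (rev (drop 4 a)) = inv (\<rho> z)"
    and prod_all: "word_prod G (rev a) = \<one>"
    using closed_walk_labels_prod[OF u(1), of 4] closed_walk_labels_prod(2)[OF u(1), of 0] u \<rho>z
    unfolding a_def by auto
  have "length a = 8"
    using u(2) by (simp add: a_def closed_walk_labels_def)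
  then have halves: "length (take 4 a) = 4" "length (drop 4 a) = 4"
    "set (take 4 a) \<subseteq> S" "set (drop 4 a) \<subseteq> S"
    using labels by (auto dest: in_set_takeD in_set_dropD)
  have far: "\<rho> z \<notin> insert z (S <#> S)" "inv (\<rho> z) \<notin> insert z (S <#> S)"
    using moved_z_not_short_product[OF aut fix_S moved] inv_short_product[of "inv (\<rho> z)"]
      \<rho>z by auto
  have distinct: "distinct (take 4 a)" "distinct (drop 4 a)"
    using not_distinct_word_prod[of "rev (take 4 a)"] not_distinct_word_prod[of "rev (drop 4 a)"]
      halves prod_first prod_second far by auto
  have "count_list a s = 2" if "s \<in> S" "s \<in> set a" for s
    using count_list_eq_2_if_word_prod_one[of "rev (drop 4 a)" "rev (take 4 a)" s]
      labels halves distinct prod_all that \<open>length a = 8\<close>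
    by (simp flip: rev_append)
  with labels distinct show ?thesis
    by blast
qed

lemma S_subset_nbhd_one: "S \<subseteq> nbhd G S \<one>"
  unfolding nbhd_def cay_adj_def by force

end

lemma (in group) symmetric_basis_anticommuting_involutions:
  assumes "symmetric_basis G r z g"
  shows "anticommuting_involutions G (g ` {1..2*r}) z"
proof -
  note basis = assms[unfolded symmetric_basis_def]
  have center: "grp_center G = {\<one>, z}" and z_neq_one: "z \<noteq> \<one>"
    using basis by blast+
  then have z_closed: "z \<in> carrier G" and z_central: "\<And>x. x \<in> carrier G \<Longrightarrow> z \<otimes> x = x \<otimes> z"
    unfolding grp_center_def by blast+
  have "z \<otimes> z \<otimes> x = x \<otimes> (z \<otimes> z)" if "x \<in> carrier G" for x
  proof -
    have "z \<otimes> z \<otimes> x = z \<otimes> (x \<otimes> z)"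
      using that z_closed by (simp add: m_assoc z_central[OF that])
    also have "\<dots> = x \<otimes> (z \<otimes> z)"
      using that z_closed by (simp flip: m_assoc add: z_central[OF that])
    finally show ?thesis .
  qed
  then have "z \<otimes> z \<in> grp_center G"
    unfolding grp_center_def using z_closed by blast
  then have z_square: "z \<otimes> z = \<one>"
    using center z_closed z_neq_one by auto
  have g_closed: "\<forall>i \<in> {1..2*r}. g i \<in> carrier G"
    and g_square: "\<forall>i \<in> {1..2*r}. g i \<otimes> g i = \<one>"
    and g_anticommute: "\<forall>i \<in> {1..2*r}. \<forall>j \<in> {1..2*r}. i \<noteq> j \<longrightarrow> g i \<otimes> g j = g j \<otimes> g i \<otimes> z"
    using basis by blast+
  show ?thesis
  proof (intro anticommuting_involutions.intro anticommuting_involutions_axioms.intro)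
    fix s t assume "s \<in> g ` {1..2*r}" "t \<in> g ` {1..2*r}" "s \<noteq> t"
    then obtain i j where "i \<in> {1..2*r}" "j \<in> {1..2*r}" "i \<noteq> j" "s = g i" "t = g j"
      by blast
    then show "s \<otimes> t = t \<otimes> s \<otimes> z"
      using g_anticommute by blast
  qed (fact is_group z_closed z_central z_neq_one z_square | use g_closed g_square in auto)+
qed

lemma (in group) symmetric_basis_distinct:
  assumes "symmetric_basis G r z g" "i \<in> {1..2*r}" "j \<in> {1..2*r}" "i \<noteq> j"
  shows "g i \<noteq> g j"
proof
  assume "g i = g j"
  moreover have "g i \<otimes> g j = g j \<otimes> g i \<otimes> z" "g j \<otimes> g j = \<one>" "g j \<in> carrier G" "z \<noteq> \<one>"
    using assms unfolding symmetric_basis_def by blast+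
  ultimately have "\<one> = \<one> \<otimes> z"
    by (simp only:)
  moreover have "z \<in> carrier G"
    using anticommuting_involutions.z_closed[OF symmetric_basis_anticommuting_involutions[OF assms(1)]] .
  ultimately show False
    using \<open>z \<noteq> \<one>\<close> by simp
qed

theorem lemma4p6:
  fixes G :: "('a, 'b) monoid_scheme" and r :: nat and z :: 'a and g :: "nat \<Rightarrow> 'a"
    and i j :: nat and \<rho> :: "'a \<Rightarrow> 'a"
  assumes "r \<ge> 1"
    and "extraspecial2 G r"
    and "symmetric_basis G r z g"
    and "i \<in> {1..2*r}" and "j \<in> {1..2*r}" and "i \<noteq> j"
    and "\<rho> \<in> stab1 G (g ` {1..2*r}) \<one>\<^bsub>G\<^esub>"
    and "\<rho> z \<noteq> z"
  shows "let S = g ` {1..2*r};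
             u = map \<rho> (cyc8 G z (g i) (g j));
             a = map (\<lambda>k. u ! ((k + 1) mod 8) \<otimes>\<^bsub>G\<^esub> inv\<^bsub>G\<^esub> (u ! k)) [0..<8]
         in set a \<subseteq> S
            \<and> (\<forall>s \<in> S. s \<in> set a \<longrightarrow> count_list a s = 2)
            \<and> distinct (take 4 a) \<and> distinct (drop 4 a)"
proof -
  interpret group G
    using assms(2) unfolding extraspecial2_def by blast
  interpret anticommuting_involutions G "g ` {1..2*r}" z
    using symmetric_basis_anticommuting_involutions[OF assms(3)] .
  have gij: "g i \<in> g ` {1..2*r}" "g j \<in> g ` {1..2*r}"
    using assms(4,5) by auto
  have "g i \<noteq> g j"
    using symmetric_basis_distinct[OF assms(3-6)] .
  have stab: "cay_aut G (g ` {1..2*r}) \<rho>" "\<rho> \<one>\<^bsub>G\<^esub> = \<one>\<^bsub>G\<^esub>"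
    "\<forall>t \<in> g ` {1..2*r}. \<rho> t = t"
    using assms(7) S_subset_nbhd_one unfolding stab1_def by auto
  show ?thesis
    using moved_z_cycle_labels[OF stab gij \<open>g i \<noteq> g j\<close> assms(8)]
    unfolding Let_def closed_walk_labels_def length_map cyc8_length .
qed

end
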